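(* Let $q>0$, $\mu=\sqrt q$, $H$ a $d$-dimensional Hilbert space with orthonormal basis $\psi_1,\dots,\psi_d$, $1\le n\le d$ and $1\le i_1<\dots<i_n\le d$. Then $(S_{i_1,\dots,i_n}^*\otimes1_H)(1_H\otimes S_{i_1,\dots,i_n})=(n-1)!_q(-\mu)^{n-1}1_{H_{i_1,\dots,i_n}}$ (as operators on $H$, $1_{H_{i_1,\dots,i_n}}$ the orthogonal projection onto $H_{i_1,\dots,i_n}$), and $(S_{i_1,\dots,i_n}^*\otimes1_{H^{\otimes(n-1)}})(1_{H^{\otimes(n-1)}}\otimes S_{i_1,\dots,i_n})=(-\mu)^{n-1}\varepsilon(A_{n-1})\,1_{H_{i_1,\dots,i_n}^{\otimes(n-1)}}$ (as operators on $H^{\otimes(n-1)}$). In particular $(S^*\otimes1_H)(1_H\otimes S)=(d-1)!_q(-\mu)^{d-1}1_H$ and $(S^*\otimes1_{H^{\otimes(d-1)}})(1_{H^{\otimes(d-1)}}\otimes S)=(-\mu)^{d-1}\varepsilon(A_{d-1})$.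
   Context: $g_q$ on $H\otimes H$: $g_q\psi_i\otimes\psi_j=-\mu\psi_j\otimes\psi_i$ ($i<j$), $g_q\psi_i\otimes\psi_i=-\psi_i\otimes\psi_i$, $g_q\psi_i\otimes\psi_j=(q-1)\psi_i\otimes\psi_j-\mu\psi_j\otimes\psi_i$ ($i>j$); $\varepsilon(g_i)=1_{H^{\otimes(i-1)}}\otimes g_q\otimes1$ defines the Jimbo–Woronowicz representations of the Hecke algebras $H_m(q)$. $A_1=1$, $A_{m+1}=\sum_{i=0}^m g_i\cdots g_1\sigma(A_m)$ with $\sigma(g_i)=g_{i+1}$; $n!_q=\prod_{j=1}^n(1+\dots+q^{j-1})$. $S_{i_1,\dots,i_n}:=\sum_{p\in\mathbb P_n}(-\mu)^{i(p)}\psi_{i_{p(1)}}\otimes\dots\otimes\psi_{i_{p(n)}}$ ($i(p)$ = number of inversions), viewed as a map $\mathbb C\to H^{\otimes n}$; $S=S_{1,\dots,d}$; $H_{i_1,\dots,i_n}=\mathrm{span}\{\psi_{i_1},\dots,\psi_{i_n}\}$. *)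

theory Defs
  imports Complex_Main "HOL-Combinatorics.Permutations"
begin

text \<open>Coordinate model: H = C^d with orthonormal basis psi_1..psi_d (indices 1..d).
  The basis of H^{\<otimes>m} is indexed by lists of length m with entries in {1..d}.
  An operator H^{\<otimes>m} -> H^{\<otimes>k} is represented by its matrix (kernel)
  K :: nat list => nat list => complex, K out in = <psi_out, T psi_in>.\<close>

type_synonym kernel = "nat list \<Rightarrow> nat list \<Rightarrow> complex"

definition tens :: "nat \<Rightarrow> nat \<Rightarrow> nat list set" where
  "tens d m = {xs. length xs = m \<and> set xs \<subseteq> {1..d}}"

definition kid :: kernel where
  "kid xs ys = (if xs = ys then 1 else 0)"

definition kcomp :: "nat \<Rightarrow> nat \<Rightarrow> kernel \<Rightarrow> kernel \<Rightarrow> kernel" where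
  "kcomp d m A B = (\<lambda>xs zs. \<Sum>ys\<in>tens d m. A xs ys * B ys zs)"

definition ktensor :: "nat \<Rightarrow> nat \<Rightarrow> kernel \<Rightarrow> kernel \<Rightarrow> kernel" where
  "ktensor po pin A B = (\<lambda>xs ys. A (take po xs) (take pin ys) * B (drop po xs) (drop pin ys))"

definition kadj :: "kernel \<Rightarrow> kernel" where
  "kadj A = (\<lambda>xs ys. cnj (A ys xs))"

definition kscale :: "complex \<Rightarrow> kernel \<Rightarrow> kernel" where
  "kscale c A = (\<lambda>xs ys. c * A xs ys)"

text \<open>orthogonal projection onto H_{i_1..i_n}^{\<otimes>m} (span of the psi_j, j in set I)\<close>
definition kproj :: "nat list \<Rightarrow> kernel" where
  "kproj I = (\<lambda>xs ys. if xs = ys \<and> set xs \<subseteq> set I then 1 else 0)"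

definition qmu :: "real \<Rightarrow> complex" where
  "qmu q = complex_of_real (sqrt q)"

text \<open>g_q on H \<otimes> H: gq_coef q a b i j = coefficient of psi_a \<otimes> psi_b in g_q(psi_i \<otimes> psi_j)\<close>
definition gq_coef :: "real \<Rightarrow> nat \<Rightarrow> nat \<Rightarrow> nat \<Rightarrow> nat \<Rightarrow> complex" where
  "gq_coef q a b i j =
     (if i < j then (if (a, b) = (j, i) then - qmu q else 0)
      else if i = j then (if (a, b) = (i, i) then -1 else 0)
      else (if (a, b) = (i, j) then complex_of_real (q - 1) else 0)
           + (if (a, b) = (j, i) then - qmu q else 0))"

definition gq :: "real \<Rightarrow> kernel" where
  "gq q = (\<lambda>xs ys. gq_coef q (xs ! 0) (xs ! 1) (ys ! 0) (ys ! 1))"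

text \<open>epsilon(g_k) = 1_{H^{\<otimes>(k-1)}} \<otimes> g_q \<otimes> 1\<close>
definition eps_g :: "real \<Rightarrow> nat \<Rightarrow> kernel" where
  "eps_g q k = ktensor (k - 1) (k - 1) kid (ktensor 2 2 (gq q) kid)"

fun eps_word :: "real \<Rightarrow> nat \<Rightarrow> nat \<Rightarrow> nat list \<Rightarrow> kernel" where
  "eps_word q d m [] = kid"
| "eps_word q d m (w # ws) = kcomp d m (eps_g q w) (eps_word q d m ws)"

text \<open>A_m as a formal sum (list, with multiplicity) of words in the generators:
  A_0 = A_1 = 1, A_{m+1} = sum_{i=0}^m g_i ... g_1 sigma(A_m), sigma(g_i) = g_{i+1}.\<close>
fun A_words :: "nat \<Rightarrow> nat list list" where
  "A_words 0 = [[]]"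
| "A_words (Suc m) =
     concat (map (\<lambda>i. map (\<lambda>w. rev [1..<Suc i] @ map Suc w) (A_words m)) [0..<Suc m])"

definition eps_A :: "real \<Rightarrow> nat \<Rightarrow> nat \<Rightarrow> kernel" where
  "eps_A q d m = (\<lambda>xs ys. \<Sum>w\<leftarrow>A_words m. eps_word q d m w xs ys)"

definition qfact :: "real \<Rightarrow> nat \<Rightarrow> real" where
  "qfact q n = (\<Prod>j=1..n. \<Sum>k<j. q ^ k)"

definition inversions :: "nat \<Rightarrow> (nat \<Rightarrow> nat) \<Rightarrow> nat" where
  "inversions n p = card {(a, b). a < b \<and> b < n \<and> p a > p b}"

text \<open>S_{i_1..i_n} as a vector in H^{\<otimes>n} (I = [i_1,...,i_n]); permutations of {0..<n}\<close>
definition Svec :: "real \<Rightarrow> nat list \<Rightarrow> nat list \<Rightarrow> complex" where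
  "Svec q I js = (\<Sum>p | p permutes {..<length I}.
      (- qmu q) ^ inversions (length I) p
      * (if js = map (\<lambda>k. I ! p k) [0..<length I] then 1 else 0))"

text \<open>S_{i_1..i_n} as a map C = H^{\<otimes>0} -> H^{\<otimes>n}\<close>
definition Sker :: "real \<Rightarrow> nat list \<Rightarrow> kernel" where
  "Sker q I = (\<lambda>xs ys. Svec q I xs)"

text \<open>(S^* \<otimes> 1_{H^{\<otimes>k}})(1_{H^{\<otimes>k}} \<otimes> S), operator on H^{\<otimes>k}, n = length I\<close>
definition SS_op :: "real \<Rightarrow> nat \<Rightarrow> nat list \<Rightarrow> nat \<Rightarrow> kernel" where
  "SS_op q d I k = kcomp d (length I + k)
      (ktensor 0 (length I) (kadj (Sker q I)) kid)
      (ktensor k k kid (Sker q I))"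

end

theory Submission
  imports Defs
begin

(* Write wedge_J (qwedge q J) for the q-antisymmetric tensor of a finite index set J: its
   coefficient on psi_x1 (x) ... (x) psi_xk is (-mu)^inv(x) if x is an arrangement of J and 0
   otherwise, so that S_I = wedge_(set I).  Splitting off the first (last) tensor factor b of
   wedge_J leaves (-mu)^k wedge_(J - b), with k the number of elements of J below (above) b.

   Contracting n-1 factors of S_I against each other thus leaves, on psi_x, the sum over r of
   wedge_(J - x)(r)^2 = q^inv(r), which is (n-1)!_q.  Contracting a single factor leaves
   (-mu)^(n-1) sum_b wedge_(J - b)(z) wedge_(J - b)(x), i.e. (-mu)^(n-1) (-mu)^inv(z) wedge_(set z)(x)
   for z an arrangement of a subset of J.  That this is the matrix entry of eps(A_(n-1)) follows by
   induction along A_(m+1) = (sum_i g_i...g_1) sigma(A_m) from the insertion rule: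
   sum_(i<=m) g_i...g_1 maps psi_a (x) wedge_J to (-mu)^#{j in J. j < a} wedge_(J + a) if a is not
   in J, and to 0 if it is. *)

lemma Cons_in_tens_Suc_iff [simp]: "b # r \<in> tens d (Suc m) \<longleftrightarrow> b \<in> {1..d} \<and> r \<in> tens d m"
  by (auto simp: tens_def)

lemma tens_0 [simp]: "tens d 0 = {[]}"
  by (auto simp: tens_def)

lemma length_tens: "xs \<in> tens d m \<Longrightarrow> length xs = m"
  by (simp add: tens_def)

lemma tens_SucE:
  assumes "xs \<in> tens d (Suc m)"
  obtains y ys where "xs = y # ys" "y \<in> {1..d}" "ys \<in> tens d m"
  using assms by (cases xs) (auto simp: tens_def)

lemma tens_Suc: "tens d (Suc m) = (\<lambda>(b, r). b # r) ` ({1..d} \<times> tens d m)"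
  by (auto simp: tens_def image_iff length_Suc_conv)

lemma finite_tens [simp]: "finite (tens d m)"
  by (induction m) (auto simp: tens_Suc)

lemma sum_tens_Suc: "(\<Sum>ys\<in>tens d (Suc m). f ys) = (\<Sum>b\<in>{1..d}. \<Sum>r\<in>tens d m. f (b # r))"
proof -
  have "inj_on (\<lambda>(b, r). b # r) ({1..d} \<times> tens d m)"
    by (auto simp: inj_on_def)
  then show ?thesis
    by (simp add: tens_Suc sum.reindex sum.cartesian_product case_prod_unfold)
qed

lemma sum_tens_add: "(\<Sum>ys\<in>tens d (n + k). f ys) = (\<Sum>u\<in>tens d n. \<Sum>v\<in>tens d k. f (u @ v))"
  by (induction n arbitrary: f) (simp_all add: sum_tens_Suc)

lemma sum_tens_Suc_snoc: "(\<Sum>ys\<in>tens d (Suc m). f ys) = (\<Sum>u\<in>tens d m. \<Sum>b\<in>{1..d}. f (u @ [b]))"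
  using sum_tens_add[where n=m and k=1] by (simp add: sum_tens_Suc)

lemma sum_delta_mult_left:
  "finite A \<Longrightarrow> (\<Sum>y\<in>A. (if x = y then 1 else 0) * f y) = (if x \<in> A then f x else (0::'a::semiring_1))"
  by (simp add: if_distrib[of "\<lambda>c. c * _"] cong: if_cong)

lemma sum_delta_mult_right:
  "finite A \<Longrightarrow> (\<Sum>y\<in>A. f y * (if y = x then 1 else 0)) = (if x \<in> A then f x else (0::'a::semiring_1))"
  by (simp add: if_distrib[of "\<lambda>c. _ * c"] cong: if_cong)

definition kapply :: "nat \<Rightarrow> nat \<Rightarrow> kernel \<Rightarrow> (nat list \<Rightarrow> complex) \<Rightarrow> nat list \<Rightarrow> complex" where
  "kapply d m K v xs = (\<Sum>ys\<in>tens d m. K xs ys * v ys)"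

lemma kapply_cong:
  "(\<And>ys. ys \<in> tens d m \<Longrightarrow> v ys = w ys) \<Longrightarrow> kapply d m K v xs = kapply d m K w xs"
  by (simp add: kapply_def)

lemma kapply_cmult: "kapply d m K (\<lambda>ys. c * v ys) xs = c * kapply d m K v xs"
  by (simp add: kapply_def sum_distrib_left algebra_simps)

lemma kapply_zero: "kapply d m K (\<lambda>ys. 0) xs = 0"
  by (simp add: kapply_def)

lemma kapply_add: "kapply d m K (\<lambda>ys. v ys + w ys) xs = kapply d m K v xs + kapply d m K w xs"
  by (simp add: kapply_def sum.distrib algebra_simps)

lemma kapply_diff: "kapply d m K (\<lambda>ys. v ys - w ys) xs = kapply d m K v xs - kapply d m K w xs"
  by (simp add: kapply_def sum_subtractf algebra_simps)

lemma kapply_sum: "kapply d m K (\<lambda>ys. \<Sum>b\<in>B. f b ys) xs = (\<Sum>b\<in>B. kapply d m K (f b) xs)"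
  by (simp add: kapply_def sum_distrib_left sum.swap[of _ B] algebra_simps)

lemma kapply_sum_list:
  "kapply d m K (\<lambda>ys. \<Sum>w\<leftarrow>ws. f w ys) xs = (\<Sum>w\<leftarrow>ws. kapply d m K (f w) xs)"
  by (induction ws) (simp_all add: kapply_zero kapply_add)

lemma kapply_kid: "xs \<in> tens d m \<Longrightarrow> kapply d m kid v xs = v xs"
  by (simp add: kapply_def kid_def sum_delta_mult_left)

lemma kapply_column: "zs \<in> tens d m \<Longrightarrow> kapply d m K (\<lambda>ys. kid ys zs) xs = K xs zs"
  by (simp add: kapply_def kid_def sum_delta_mult_right)

lemma kapply_kcomp: "kapply d m (kcomp d m A B) v xs = kapply d m A (kapply d m B v) xs"
proof -
  have "kapply d m (kcomp d m A B) v xs = (\<Sum>z\<in>tens d m. \<Sum>y\<in>tens d m. A xs y * B y z * v z)"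
    by (simp add: kapply_def kcomp_def sum_distrib_right)
  also have "\<dots> = (\<Sum>y\<in>tens d m. \<Sum>z\<in>tens d m. A xs y * B y z * v z)"
    by (rule sum.swap)
  also have "\<dots> = kapply d m A (kapply d m B v) xs"
    by (simp add: kapply_def sum_distrib_left mult.assoc)
  finally show ?thesis .
qed

lemma kapply_eps_word_append:
  "xs \<in> tens d m \<Longrightarrow> kapply d m (eps_word q d m (u @ w)) v xs
     = kapply d m (eps_word q d m u) (kapply d m (eps_word q d m w) v) xs"
proof (induction u arbitrary: xs)
  case Nil
  then show ?case by (simp add: kapply_kid)
next
  case (Cons x u)
  then show ?case
    by (simp add: kapply_kcomp) (rule kapply_cong, simp)
qed

lemma eps_word_append:
  assumes "xs \<in> tens d m" "zs \<in> tens d m"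
  shows "eps_word q d m (u @ w) xs zs = kapply d m (eps_word q d m u) (\<lambda>ys. eps_word q d m w ys zs) xs"
proof -
  have "eps_word q d m (u @ w) xs zs
      = kapply d m (eps_word q d m u) (kapply d m (eps_word q d m w) (\<lambda>ys. kid ys zs)) xs"
    using kapply_column[OF assms(2)] kapply_eps_word_append[OF assms(1)] by metis
  also have "\<dots> = kapply d m (eps_word q d m u) (\<lambda>ys. eps_word q d m w ys zs) xs"
    by (rule kapply_cong) (simp add: kapply_column[OF assms(2)])
  finally show ?thesis .
qed

lemma eps_g_Suc_Cons:
  "1 \<le> x \<Longrightarrow> eps_g q (Suc x) (y # ys) (b # r) = (if y = b then eps_g q x ys r else 0)"
  by (cases x) (auto simp: eps_g_def ktensor_def kid_def)

lemma kapply_eps_g_Suc: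
  assumes "1 \<le> x" "y \<in> {1..d}"
  shows "kapply d (Suc m) (eps_g q (Suc x)) v (y # ys) = kapply d m (eps_g q x) (\<lambda>r. v (y # r)) ys"
proof -
  have "kapply d (Suc m) (eps_g q (Suc x)) v (y # ys)
      = (\<Sum>b\<in>{1..d}. if y = b then (\<Sum>r\<in>tens d m. eps_g q x ys r * v (y # r)) else 0)"
    unfolding kapply_def sum_tens_Suc using assms(1)
    by (intro sum.cong) (auto simp: eps_g_Suc_Cons)
  then show ?thesis
    using assms(2) by (simp add: kapply_def)
qed

lemma kapply_eps_word_map_Suc:
  assumes "\<forall>x\<in>set u. 1 \<le> x" "y \<in> {1..d}" "ys \<in> tens d m"
  shows "kapply d (Suc m) (eps_word q d (Suc m) (map Suc u)) v (y # ys)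
    = kapply d m (eps_word q d m u) (\<lambda>r. v (y # r)) ys"
  using assms
proof (induction u arbitrary: ys)
  case Nil
  then show ?case by (simp add: kapply_kid)
next
  case (Cons x u)
  have "kapply d (Suc m) (eps_word q d (Suc m) (map Suc (x # u))) v (y # ys)
     = kapply d m (eps_g q x) (\<lambda>r. kapply d (Suc m) (eps_word q d (Suc m) (map Suc u)) v (y # r)) ys"
    using Cons.prems by (simp add: kapply_kcomp kapply_eps_g_Suc)
  also have "\<dots> = kapply d m (eps_g q x) (kapply d m (eps_word q d m u) (\<lambda>r. v (y # r))) ys"
    by (rule kapply_cong) (use Cons in auto)
  finally show ?case
    by (simp add: kapply_kcomp)
qed

lemma eps_word_map_Suc_Cons:
  assumes "\<forall>x\<in>set w. 1 \<le> x" "y \<in> {1..d}" "ys \<in> tens d m" "a \<in> {1..d}" "zs \<in> tens d m"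
  shows "eps_word q d (Suc m) (map Suc w) (y # ys) (a # zs)
    = (if y = a then eps_word q d m w ys zs else 0)"
proof -
  have "eps_word q d (Suc m) (map Suc w) (y # ys) (a # zs)
      = kapply d (Suc m) (eps_word q d (Suc m) (map Suc w)) (\<lambda>r. kid r (a # zs)) (y # ys)"
    by (rule kapply_column[symmetric]) (use assms in simp)
  also have "\<dots> = kapply d m (eps_word q d m w) (\<lambda>r. kid (y # r) (a # zs)) ys"
    by (rule kapply_eps_word_map_Suc[OF assms(1-3)])
  also have "\<dots> = kapply d m (eps_word q d m w) (\<lambda>r. (if y = a then 1 else 0) * kid r zs) ys"
    by (rule kapply_cong) (simp add: kid_def)
  finally show ?thesis
    by (simp add: kapply_cmult kapply_column[OF assms(5)])
qed

lemma sum_sum_delta: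
  assumes "finite A" "finite B" "a \<in> A" "b \<in> B"
  shows "(\<Sum>x\<in>A. \<Sum>y\<in>B. (if x = a \<and> y = b then k else 0) * f x y) = k * (f a b :: 'c::semiring_1)"
proof -
  have "(\<Sum>x\<in>A. \<Sum>y\<in>B. (if x = a \<and> y = b then k else 0) * f x y)
      = (\<Sum>x\<in>A. if x = a then (\<Sum>y\<in>B. if y = b then k * f x y else 0) else 0)"
    by (intro sum.cong refl) (simp add: if_distrib[of "\<lambda>x. x * _"] cong: if_cong)
  also have "\<dots> = k * f a b"
    using assms by simp
  finally show ?thesis .
qed

lemma sum_gq_coef:
  assumes "x1 \<in> {1..d}" "x2 \<in> {1..d}"
  shows "(\<Sum>b\<in>{1..d}. \<Sum>c\<in>{1..d}. gq_coef q x1 x2 b c * f b c)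
    = (if x1 < x2 then - qmu q * f x2 x1 else if x1 = x2 then - f x1 x1
       else complex_of_real (q - 1) * f x1 x2 - qmu q * f x2 x1)"
proof -
  note delta = sum_sum_delta[OF finite_atLeastAtMost finite_atLeastAtMost]
  consider "x1 < x2" | "x1 = x2" | "x2 < x1"
    by linarith
  then show ?thesis
  proof cases
    case 1
    then have "gq_coef q x1 x2 b c = (if b = x2 \<and> c = x1 then - qmu q else 0)" for b c
      by (auto simp: gq_coef_def)
    then show ?thesis
      using 1 by (simp only: delta[OF assms(2,1)]) simp
  next
    case 2
    then have "gq_coef q x1 x2 b c = (if b = x1 \<and> c = x1 then - 1 else 0)" for b c
      by (auto simp: gq_coef_def)
    then show ?thesis
      by (simp only: delta[OF assms(1,1)]) (use 2 in simp)
  next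
    case 3
    then have "gq_coef q x1 x2 b c = (if b = x1 \<and> c = x2 then complex_of_real (q - 1) else 0)
         + (if b = x2 \<and> c = x1 then - qmu q else 0)" for b c
      by (auto simp: gq_coef_def)
    then show ?thesis
      using 3 by (simp only: distrib_right sum.distrib delta[OF assms(1,2)] delta[OF assms(2,1)]) simp
  qed
qed

lemma kapply_eps_g_1:
  assumes "x1 \<in> {1..d}" "x2 \<in> {1..d}" "r \<in> tens d m"
  shows "kapply d (Suc (Suc m)) (eps_g q 1) v (x1 # x2 # r)
    = (if x1 < x2 then - qmu q * v (x2 # x1 # r) else if x1 = x2 then - v (x1 # x1 # r)
       else complex_of_real (q - 1) * v (x1 # x2 # r) - qmu q * v (x2 # x1 # r))"
proof -
  have "eps_g q 1 (x1 # x2 # r) (b # c # r') = gq_coef q x1 x2 b c * (if r' = r then 1 else 0)"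
    for b c r'
    by (auto simp: eps_g_def ktensor_def gq_def kid_def)
  then have "kapply d (Suc (Suc m)) (eps_g q 1) v (x1 # x2 # r)
     = (\<Sum>b\<in>{1..d}. \<Sum>c\<in>{1..d}. \<Sum>r'\<in>tens d m.
          gq_coef q x1 x2 b c * v (b # c # r') * (if r' = r then 1 else 0))"
    unfolding kapply_def sum_tens_Suc by (simp add: mult_ac)
  also have "\<dots> = (\<Sum>b\<in>{1..d}. \<Sum>c\<in>{1..d}. gq_coef q x1 x2 b c * v (b # c # r))"
    using assms(3) by (simp add: sum_delta_mult_right)
  finally show ?thesis
    by (simp only: sum_gq_coef[OF assms(1,2)])
qed

section \<open>q-antisymmetric tensors\<close>

fun inv_count :: "'a::linorder list \<Rightarrow> nat" where
  "inv_count [] = 0"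
| "inv_count (x # xs) = length (filter (\<lambda>y. y < x) xs) + inv_count xs"

lemma inv_count_snoc: "inv_count (r @ [b]) = inv_count r + length (filter (\<lambda>y. b < y) r)"
  by (induction r) auto

definition count_below :: "'a::linorder \<Rightarrow> 'a set \<Rightarrow> nat" where
  "count_below b J = card {j\<in>J. j < b}"

definition count_above :: "'a::linorder \<Rightarrow> 'a set \<Rightarrow> nat" where
  "count_above b J = card {j\<in>J. b < j}"

definition qwedge :: "real \<Rightarrow> nat set \<Rightarrow> nat list \<Rightarrow> complex" where
  "qwedge q J xs = (if distinct xs \<and> set xs = J then (- qmu q) ^ inv_count xs else 0)"

lemma qwedge_eq_0: "\<not> (distinct xs \<and> set xs = J) \<Longrightarrow> qwedge q J xs = 0"
  unfolding qwedge_def by (rule if_not_P)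

lemma cnj_qwedge [simp]: "cnj (qwedge q J xs) = qwedge q J xs"
  by (simp add: qwedge_def qmu_def)

lemma length_filter_distinct: "distinct r \<Longrightarrow> length (filter P r) = card {j\<in>set r. P j}"
  by (metis distinct_card distinct_filter set_filter)

lemma qwedge_Cons:
  "qwedge q J (b # r) = (if b \<in> J then (- qmu q) ^ count_below b J * qwedge q (J - {b}) r else 0)"
proof (cases "b \<in> J \<and> distinct r \<and> set r = J - {b}")
  case True
  then have "length (filter (\<lambda>y. y < b) r) = count_below b J"
    by (simp add: length_filter_distinct count_below_def) (metis order_less_irrefl)
  moreover have "distinct (b # r) \<and> set (b # r) = J"
    using True by auto
  ultimately show ?thesis
    using True by (simp add: qwedge_def power_add)
next
  case False
  then show ?thesis
    by (auto simp: qwedge_def)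
qed

lemma qwedge_snoc:
  "qwedge q J (r @ [b]) = (if b \<in> J then (- qmu q) ^ count_above b J * qwedge q (J - {b}) r else 0)"
proof (cases "b \<in> J \<and> distinct r \<and> set r = J - {b}")
  case True
  then have "length (filter (\<lambda>y. b < y) r) = count_above b J"
    by (simp add: length_filter_distinct count_above_def) (metis order_less_irrefl)
  moreover have "distinct (r @ [b]) \<and> set (r @ [b]) = J"
    using True by auto
  ultimately show ?thesis
    using True by (simp add: qwedge_def power_add inv_count_snoc mult.commute)
next
  case False
  then show ?thesis
    by (auto simp: qwedge_def)
qed

lemma count_below_add_count_above:
  assumes "finite J" "b \<in> J"
  shows "count_below b J + count_above b J = card J - 1"
proof -
  have "{j\<in>J. j < b} \<union> {j\<in>J. b < j} = J - {b}" "{j\<in>J. j < b} \<inter> {j\<in>J. b < j} = {}"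
    by auto
  then have "card {j\<in>J. j < b} + card {j\<in>J. b < j} = card (J - {b})"
    using assms(1) by (metis card_Un_disjoint finite_Diff finite_Un)
  then show ?thesis
    using assms by (simp add: count_below_def count_above_def)
qed

lemma count_below_insert:
  assumes "finite J" "a \<notin> J"
  shows "count_below x (insert a J) = (if a < x then Suc (count_below x J) else count_below x J)"
proof (cases "a < x")
  case True
  then have "{j\<in>insert a J. j < x} = insert a {j\<in>J. j < x}"
    by auto
  with True assms show ?thesis
    by (simp add: count_below_def)
next
  case False
  then have "{j\<in>insert a J. j < x} = {j\<in>J. j < x}"
    by auto
  with False show ?thesis
    by (simp add: count_below_def)
qed

lemma count_below_Diff_self: "count_below b (J - {b}) = count_below b J"
proof -
  have "{j\<in>J - {b}. j < b} = {j\<in>J. j < b}"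
    by auto
  then show ?thesis
    by (simp add: count_below_def)
qed

lemma qmu_power_square: "q \<ge> 0 \<Longrightarrow> (- qmu q) ^ k * (- qmu q) ^ k = complex_of_real q ^ k"
  by (simp add: qmu_def flip: power_mult_distrib of_real_mult)

lemma bij_betw_count_below:
  assumes "finite L"
  shows "bij_betw (\<lambda>b. count_below b L) L {..<card L}"
proof -
  have less: "count_below b L < count_below b' L" if "b \<in> L" "b < b'" for b b'
    unfolding count_below_def
    by (rule psubset_card_mono) (use assms that in auto)
  have inj: "inj_on (\<lambda>b. count_below b L) L"
    by (rule inj_onI) (metis less less_irrefl linorder_neqE)
  have "count_below b L < card L" if "b \<in> L" for b
    unfolding count_below_def by (rule psubset_card_mono) (use assms that in auto)
  then have "(\<lambda>b. count_below b L) ` L \<subseteq> {..<card L}"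
    by auto
  moreover have "card ((\<lambda>b. count_below b L) ` L) = card {..<card L}"
    using inj by (simp add: card_image)
  ultimately have "(\<lambda>b. count_below b L) ` L = {..<card L}"
    by (simp add: card_subset_eq)
  with inj show ?thesis
    by (simp add: bij_betw_def)
qed

lemma sum_power_count_below:
  "finite L \<Longrightarrow> (\<Sum>b\<in>L. x ^ count_below b L) = (\<Sum>k<card L. x ^ k)"
  using sum.reindex_bij_betw[OF bij_betw_count_below, of L "\<lambda>k. x ^ k"] by simp

lemma sum_power_count_below_less:
  assumes "finite J"
  shows "(\<Sum>b\<in>{b\<in>J. b < a}. x ^ count_below b J) = (\<Sum>k<count_below a J. x ^ k)"
proof -
  have "count_below b J = count_below b {b\<in>J. b < a}" if "b < a" for b
    unfolding count_below_def using that by (metis (lifting) dual_order.strict_trans mem_Collect_eq)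
  then have "(\<Sum>b\<in>{b\<in>J. b < a}. x ^ count_below b J) = (\<Sum>b\<in>{b\<in>J. b < a}. x ^ count_below b {b\<in>J. b < a})"
    by (intro sum.cong) auto
  also have "\<dots> = (\<Sum>k<count_below a J. x ^ k)"
    by (subst sum_power_count_below) (simp_all add: assms count_below_def)
  finally show ?thesis .
qed

lemma sum_qwedge_square:
  assumes "q \<ge> 0" "L \<subseteq> {1..d}" "card L = m"
  shows "(\<Sum>u\<in>tens d m. qwedge q L u * qwedge q L u) = complex_of_real (qfact q m)"
  using assms(2,3)
proof (induction m arbitrary: L)
  case 0
  then have "L = {}"
    using finite_subset by fastforce
  then show ?case
    by (simp add: qwedge_def qfact_def)
next
  case (Suc m)
  have fin: "finite L"
    using Suc.prems(1) finite_subset by blast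
  have "(\<Sum>r\<in>tens d m. qwedge q L (b # r) * qwedge q L (b # r))
      = complex_of_real q ^ count_below b L * complex_of_real (qfact q m)" if "b \<in> L" for b
  proof -
    have "(\<Sum>r\<in>tens d m. qwedge q L (b # r) * qwedge q L (b # r))
       = (- qmu q) ^ count_below b L * (- qmu q) ^ count_below b L
         * (\<Sum>r\<in>tens d m. qwedge q (L - {b}) r * qwedge q (L - {b}) r)"
      using that by (simp add: qwedge_Cons sum_distrib_left mult_ac)
    also have "(\<Sum>r\<in>tens d m. qwedge q (L - {b}) r * qwedge q (L - {b}) r) = complex_of_real (qfact q m)"
      using Suc.prems that fin by (intro Suc.IH) auto
    finally show ?thesis
      using assms(1) by (simp add: qmu_power_square)
  qed
  then have "(\<Sum>u\<in>tens d (Suc m). qwedge q L u * qwedge q L u)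
      = (\<Sum>b\<in>{1..d}. if b \<in> L
          then complex_of_real q ^ count_below b L * complex_of_real (qfact q m) else 0)"
    unfolding sum_tens_Suc by (intro sum.cong) (auto simp: qwedge_Cons)
  also have "\<dots> = (\<Sum>b\<in>L. complex_of_real q ^ count_below b L) * complex_of_real (qfact q m)"
    using Suc.prems(1) by (simp add: sum.If_cases Int_absorb1 Int_absorb2 sum_distrib_right)
  also have "\<dots> = complex_of_real (qfact q (Suc m))"
    using fin Suc.prems(2) by (simp add: sum_power_count_below qfact_def mult.commute)
  finally show ?case .
qed

definition inv_pairs :: "'a::linorder list \<Rightarrow> (nat \<times> nat) set" where
  "inv_pairs l = {(i, j). i < j \<and> j < length l \<and> l ! j < l ! i}"

lemma finite_inv_pairs: "finite (inv_pairs l)"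
  by (rule finite_subset[of _ "{..<length l} \<times> {..<length l}"]) (auto simp: inv_pairs_def)

lemma inv_pairs_Cons:
  "inv_pairs (x # xs) = (\<lambda>j. (0, Suc j)) ` {j. j < length xs \<and> xs ! j < x}
     \<union> (\<lambda>(i, j). (Suc i, Suc j)) ` inv_pairs xs"
proof (rule set_eqI)
  fix p :: "nat \<times> nat"
  obtain i j where p: "p = (i, j)"
    by (cases p)
  show "p \<in> inv_pairs (x # xs) \<longleftrightarrow> p \<in> (\<lambda>j. (0, Suc j)) ` {j. j < length xs \<and> xs ! j < x}
     \<union> (\<lambda>(i, j). (Suc i, Suc j)) ` inv_pairs xs"
    unfolding p by (cases i; cases j) (auto simp: inv_pairs_def image_iff)
qed

lemma inv_count_eq_card: "inv_count l = card (inv_pairs l)"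
proof (induction l)
  case Nil
  then show ?case
    by (simp add: inv_pairs_def)
next
  case (Cons x xs)
  have "card ((\<lambda>j. (0::nat, Suc j)) ` {j. j < length xs \<and> xs ! j < x}) = length (filter (\<lambda>y. y < x) xs)"
    by (subst card_image) (auto simp: inj_on_def length_filter_conv_card)
  moreover have "card ((\<lambda>(i, j). (Suc i, Suc j)) ` inv_pairs xs) = card (inv_pairs xs)"
    by (rule card_image) (auto simp: inj_on_def)
  ultimately show ?case
    unfolding inv_pairs_Cons using Cons finite_inv_pairs
    by (subst card_Un_disjoint) auto
qed

lemma strict_sorted_nth_less_iff:
  fixes I :: "'a::linorder list"
  assumes "sorted_wrt (<) I" "i < length I" "j < length I"
  shows "I ! i < I ! j \<longleftrightarrow> i < j"
proof
  show "i < j \<Longrightarrow> I ! i < I ! j"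
    using assms by (simp add: sorted_wrt_nth_less)
  show "I ! i < I ! j \<Longrightarrow> i < j"
    using assms sorted_wrt_nth_less[OF assms(1), of j i] by (cases i j rule: linorder_cases) auto
qed

lemma inversions_eq_inv_count_permute_list:
  assumes "sorted_wrt (<) I" "p permutes {..<length I}"
  shows "inversions (length I) p = inv_count (permute_list p I)"
proof -
  have "permute_list p I ! b < permute_list p I ! a \<longleftrightarrow> p b < p a"
    if "a < length I" "b < length I" for a b
    using that assms permutes_in_image[OF assms(2)]
    by (simp add: permute_list_nth strict_sorted_nth_less_iff)
  then have "inv_pairs (permute_list p I) = {(a, b). a < b \<and> b < length I \<and> p b < p a}"
    by (auto simp: inv_pairs_def)
  then show ?thesis
    by (simp add: inv_count_eq_card inversions_def)
qed

lemma permute_list_distinct_inj: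
  assumes "distinct I" "p permutes {..<length I}" "p' permutes {..<length I}"
    and "permute_list p I = permute_list p' I"
  shows "p = p'"
proof
  fix i
  show "p i = p' i"
  proof (cases "i < length I")
    case True
    then have "I ! p i = I ! p' i"
      using assms(2-4) by (metis permute_list_nth)
    moreover have "p i < length I" "p' i < length I"
      using assms(2,3) True by (auto dest: permutes_in_image)
    ultimately show ?thesis
      using assms(1) by (simp add: nth_eq_iff_index_eq)
  next
    case False
    then show ?thesis
      using assms(2,3) by (simp add: permutes_not_in)
  qed
qed

lemma Svec_eq_qwedge:
  assumes "sorted_wrt (<) I"
  shows "Svec q I js = qwedge q (set I) js"
proof -
  let ?P = "{p. p permutes {..<length I}}"
  have dI: "distinct I"
    using assms by (simp add: strict_sorted_iff)
  have Svec: "Svec q I js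
      = (\<Sum>p\<in>?P. (- qmu q) ^ inversions (length I) p * (if js = permute_list p I then 1 else 0))"
    by (simp add: Svec_def permute_list_def)
  show ?thesis
  proof (cases "distinct js \<and> set js = set I")
    case False
    then have "js \<noteq> permute_list p I" if "p permutes {..<length I}" for p
      using that dI by auto
    then have "Svec q I js = 0"
      unfolding Svec by (intro sum.neutral) simp
    then show ?thesis
      using False by (simp add: qwedge_eq_0)
  next
    case True
    then have "mset js = mset I"
      using dI set_eq_iff_mset_eq_distinct by blast
    then obtain p0 where p0: "p0 permutes {..<length I}" "permute_list p0 I = js"
      by (rule mset_eq_permutation)
    have "Svec q I js = (\<Sum>p\<in>?P. if p = p0 then (- qmu q) ^ inversions (length I) p else 0)"
      unfolding Svec
    proof (rule sum.cong[OF refl])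
      fix p
      assume "p \<in> ?P"
      then have "js = permute_list p I \<longleftrightarrow> p = p0"
        using p0 permute_list_distinct_inj[OF dI _ p0(1)] by (metis mem_Collect_eq)
      then show "(- qmu q) ^ inversions (length I) p * (if js = permute_list p I then 1 else 0)
          = (if p = p0 then (- qmu q) ^ inversions (length I) p else 0)"
        by simp
    qed
    also have "\<dots> = (- qmu q) ^ inversions (length I) p0"
      using p0(1) by (simp add: finite_permutations)
    also have "\<dots> = (- qmu q) ^ inv_count js"
      using inversions_eq_inv_count_permute_list[OF assms p0(1)] p0(2) by simp
    finally show ?thesis
      using True by (simp add: qwedge_def)
  qed
qed

section \<open>Contractions of S with itself\<close>

lemma SS_op_eq_sum:
  assumes "sorted_wrt (<) I" "xs \<in> tens d k"
  shows "SS_op q d I k xs zs = (\<Sum>u\<in>tens d (length I).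
    qwedge q (set I) u * kid (take k (u @ xs)) (take k zs) * qwedge q (set I) (drop k (u @ xs)))"
proof -
  let ?n = "length I" and ?S = "Svec q I"
  have "SS_op q d I k xs zs = (\<Sum>u\<in>tens d ?n. \<Sum>v\<in>tens d k.
      (if xs = v then 1 else 0) * (cnj (?S u) * kid (take k (u @ v)) (take k zs) * ?S (drop k (u @ v))))"
    unfolding SS_op_def kcomp_def ktensor_def kadj_def Sker_def sum_tens_add
    by (intro sum.cong refl) (simp add: length_tens kid_def)
  also have "\<dots> = (\<Sum>u\<in>tens d ?n. cnj (?S u) * kid (take k (u @ xs)) (take k zs) * ?S (drop k (u @ xs)))"
    using assms(2) by (simp add: sum_delta_mult_left)
  finally show ?thesis
    by (simp add: Svec_eq_qwedge[OF assms(1)])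
qed

lemma sum_qwedge_Cons_snoc:
  assumes "q \<ge> 0" "J \<subseteq> {1..d}" "card J = Suc n"
  shows "(\<Sum>u\<in>tens d n. qwedge q J (z # u) * qwedge q J (u @ [x]))
    = (if x = z \<and> x \<in> J then (- qmu q) ^ n * complex_of_real (qfact q n) else 0)"
proof (cases "x = z \<and> x \<in> J")
  case True
  then have z: "z = x" and xJ: "x \<in> J"
    by auto
  have fin: "finite J"
    using assms(2) finite_subset by blast
  have exp: "count_below x J + count_above x J = n"
    using assms(3) xJ fin by (simp add: count_below_add_count_above)
  have "(\<Sum>u\<in>tens d n. qwedge q J (z # u) * qwedge q J (u @ [x]))
      = (\<Sum>u\<in>tens d n. (- qmu q) ^ n * (qwedge q (J - {x}) u * qwedge q (J - {x}) u))"
    unfolding z using xJ exp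
    by (intro sum.cong refl) (simp add: qwedge_Cons qwedge_snoc ac_simps flip: power_add)
  also have "\<dots> = (- qmu q) ^ n * complex_of_real (qfact q n)"
    using assms xJ fin
    by (subst sum_qwedge_square[symmetric, where L = "J - {x}"]) (auto simp: sum_distrib_left)
  finally show ?thesis
    using z xJ by simp
next
  case False
  have Z: "qwedge q J (z # u) * qwedge q J (u @ [x]) = 0" for u
  proof (cases "x \<in> J \<and> z \<in> J")
    case True
    then have "J - {z} \<noteq> J - {x}"
      using False by blast
    then have "qwedge q (J - {z}) u = 0 \<or> qwedge q (J - {x}) u = 0"
      by (auto intro: qwedge_eq_0)
    then show ?thesis
      by (auto simp: qwedge_Cons qwedge_snoc)
  qed (auto simp: qwedge_Cons qwedge_snoc)
  show ?thesis
    unfolding if_not_P[OF False] by (intro sum.neutral ballI Z)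
qed

lemma SS_op_1:
  assumes "q > 0" "sorted_wrt (<) I" "set I \<subseteq> {1..d}" "length I = Suc n"
    and "xs \<in> tens d 1" "zs \<in> tens d 1"
  shows "SS_op q d I 1 xs zs = kscale (complex_of_real (qfact q n) * (- qmu q) ^ n) (kproj I) xs zs"
proof -
  obtain x z where xz: "xs = [x]" "zs = [z]"
    using assms(5,6) by (auto elim!: tens_SucE)
  have card: "card (set I) = Suc n"
    using assms(2,4) by (simp add: strict_sorted_iff distinct_card)
  have "SS_op q d I 1 xs zs = (\<Sum>b\<in>{1..d}.
      (\<Sum>u\<in>tens d n. qwedge q (set I) (b # u) * qwedge q (set I) (u @ [x])) * (if b = z then 1 else 0))"
    unfolding SS_op_eq_sum[OF assms(2,5)] assms(4) sum_tens_Suc unfolding xz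
    by (intro sum.cong refl) (simp add: kid_def sum_distrib_right)
  also have "\<dots> = (\<Sum>u\<in>tens d n. qwedge q (set I) (z # u) * qwedge q (set I) (u @ [x]))"
    using assms(6) xz by (simp add: sum_delta_mult_right)
  also have "\<dots> = (if x = z \<and> x \<in> set I then (- qmu q) ^ n * complex_of_real (qfact q n) else 0)"
    using assms(1,3) card by (simp add: sum_qwedge_Cons_snoc)
  finally show ?thesis
    using xz by (cases "x = z") (simp_all add: kscale_def kproj_def ac_simps)
qed

lemma kcomp_kproj_right:
  assumes "zs \<in> tens d m"
  shows "kcomp d m K (kproj I) xs zs = (if set zs \<subseteq> set I then K xs zs else 0)"
proof -
  have "kcomp d m K (kproj I) xs zs
      = (\<Sum>ys\<in>tens d m. (if set zs \<subseteq> set I then K xs ys else 0) * (if ys = zs then 1 else 0))"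
    unfolding kcomp_def kproj_def by (intro sum.cong refl) auto
  also have "\<dots> = (if set zs \<subseteq> set I then K xs zs else 0)"
    using assms by (simp only: sum_delta_mult_right[OF finite_tens]) simp
  finally show ?thesis .
qed

section \<open>The insertion operator and eps(A_m)\<close>

(* psi_a (x) v *)
definition basis_tensor :: "nat \<Rightarrow> (nat list \<Rightarrow> complex) \<Rightarrow> nat list \<Rightarrow> complex" where
  "basis_tensor a v ys = (case ys of [] \<Rightarrow> 0 | y # r \<Rightarrow> if y = a then v r else 0)"

lemma basis_tensor_Cons [simp]: "basis_tensor a v (y # r) = (if y = a then v r else 0)"
  by (simp add: basis_tensor_def)

definition eps_insert :: "real \<Rightarrow> nat \<Rightarrow> nat \<Rightarrow> kernel" where
  "eps_insert q d m xs ys = (\<Sum>i<Suc m. eps_word q d (Suc m) (rev [1..<Suc i]) xs ys)"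

lemma kapply_eps_insert:
  "kapply d (Suc m) (eps_insert q d m) v xs
    = (\<Sum>i<Suc m. kapply d (Suc m) (eps_word q d (Suc m) (rev [1..<Suc i])) v xs)"
  unfolding kapply_def eps_insert_def sum_distrib_right by (rule sum.swap)

lemma rev_upt_Suc_Suc: "rev [1..<Suc (Suc i)] = map Suc (rev [1..<Suc i]) @ [1]"
proof -
  have "[1..<Suc (Suc i)] = 1 # map Suc [1..<Suc i]"
    by (simp del: upt_Suc add: map_Suc_upt upt_conv_Cons)
  then show ?thesis
    by (simp add: rev_map)
qed

(* sum_(i<=m+1) g_i...g_1 = 1 + sigma(sum_(i<=m) g_i...g_1) g_1 *)
lemma kapply_eps_insert_Suc:
  assumes "x \<in> {1..d}" "xs \<in> tens d (Suc m)"
  shows "kapply d (Suc (Suc m)) (eps_insert q d (Suc m)) v (x # xs)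
    = v (x # xs)
      + kapply d (Suc m) (eps_insert q d m) (\<lambda>ys. kapply d (Suc (Suc m)) (eps_g q 1) v (x # ys)) xs"
proof -
  let ?g1v = "kapply d (Suc (Suc m)) (eps_g q 1) v"
  have mem: "x # xs \<in> tens d (Suc (Suc m))"
    using assms by simp
  have shift: "kapply d (Suc (Suc m)) (eps_word q d (Suc (Suc m)) (rev [1..<Suc (Suc i)])) v (x # xs)
     = kapply d (Suc m) (eps_word q d (Suc m) (rev [1..<Suc i])) (\<lambda>ys. ?g1v (x # ys)) xs" for i
  proof -
    have "kapply d (Suc (Suc m)) (eps_word q d (Suc (Suc m)) (rev [1..<Suc (Suc i)])) v (x # xs)
      = kapply d (Suc (Suc m)) (eps_word q d (Suc (Suc m)) (map Suc (rev [1..<Suc i])))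
          (kapply d (Suc (Suc m)) (eps_word q d (Suc (Suc m)) [1]) v) (x # xs)"
      unfolding rev_upt_Suc_Suc by (rule kapply_eps_word_append[OF mem])
    also have "\<dots> = kapply d (Suc m) (eps_word q d (Suc m) (rev [1..<Suc i]))
          (\<lambda>ys. kapply d (Suc (Suc m)) (eps_word q d (Suc (Suc m)) [1]) v (x # ys)) xs"
      by (rule kapply_eps_word_map_Suc) (use assms in auto)
    also have "\<dots> = kapply d (Suc m) (eps_word q d (Suc m) (rev [1..<Suc i])) (\<lambda>ys. ?g1v (x # ys)) xs"
      by (intro kapply_cong) (simp add: kapply_kcomp, rule kapply_cong, simp add: kapply_kid)
    finally show ?thesis .
  qed
  have empty: "rev [1..<Suc 0] = []"
    by simp
  show ?thesis
    unfolding kapply_eps_insert sum.lessThan_Suc_shift shift empty eps_word.simps(1) kapply_kid[OF mem] ..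
qed

lemma sum_basis_tensor_Cons:
  "finite J \<Longrightarrow> (\<Sum>b\<in>{b\<in>J. b < a}. c b * basis_tensor b (f b) (x # r))
    = (if x \<in> J \<and> x < a then c x * f x r else 0)"
  by (simp add: if_distrib[of "\<lambda>t. _ * t"] sum.delta' cong: if_cong)

lemma kapply_eps_g_1_basis_tensor_head:
  assumes "a \<in> {1..d}" "x \<in> {1..d}" "r \<in> tens d m" "finite J"
  shows "kapply d (Suc (Suc m)) (eps_g q 1) (basis_tensor a (qwedge q J)) (a # x # r)
    = complex_of_real (q - 1)
        * (\<Sum>b\<in>{b\<in>J. b < a}. (- qmu q) ^ count_below b J * basis_tensor b (qwedge q (J - {b})) (x # r))
      - (if a \<in> J then (- qmu q) ^ count_below a J * basis_tensor a (qwedge q (J - {a})) (x # r) else 0)"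
  unfolding kapply_eps_g_1[OF assms(1-3)] sum_basis_tensor_Cons[OF assms(4)]
  by (cases "a < x"; cases "a = x") (auto simp: qwedge_Cons)

lemma kapply_eps_g_1_basis_tensor_other:
  assumes "y \<in> {1..d}" "x \<in> {1..d}" "r \<in> tens d m" "y \<noteq> a"
  shows "kapply d (Suc (Suc m)) (eps_g q 1) (basis_tensor a (qwedge q J)) (y # x # r)
    = (if y \<in> J then (- qmu q) ^ Suc (count_below y J) * basis_tensor a (qwedge q (J - {y})) (x # r) else 0)"
  unfolding kapply_eps_g_1[OF assms(1-3)]
  using assms(4) by (cases "y < x"; cases "y = x") (auto simp: qwedge_Cons)

lemma one_add_sum_qmu_square_count_below:
  assumes "q \<ge> 0" "finite J"
  shows "1 + complex_of_real (q - 1)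
      * (\<Sum>b\<in>{b\<in>J. b < a}. (- qmu q) ^ count_below b J * (- qmu q) ^ count_below b J)
    = (- qmu q) ^ count_below a J * (- qmu q) ^ count_below a J"
proof -
  have "(\<Sum>b\<in>{b\<in>J. b < a}. (- qmu q) ^ count_below b J * (- qmu q) ^ count_below b J)
      = (\<Sum>k<count_below a J. complex_of_real q ^ k)"
    using assms by (simp add: qmu_power_square sum_power_count_below_less)
  then show ?thesis
    using assms(1) power_diff_1_eq[of "complex_of_real q" "count_below a J"]
    by (simp add: qmu_power_square algebra_simps)
qed

lemma kapply_eps_insert_qwedge_head:
  assumes "q > 0" "finite J" "a \<in> {1..d}" "xs \<in> tens d (Suc m)"
    and IH: "\<And>b. b \<in> J \<Longrightarrow> kapply d (Suc m) (eps_insert q d m) (basis_tensor b (qwedge q (J - {b}))) xs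
      = (- qmu q) ^ count_below b J * qwedge q J xs"
  shows "kapply d (Suc (Suc m)) (eps_insert q d (Suc m)) (basis_tensor a (qwedge q J)) (a # xs)
    = (if a \<in> J then 0 else (- qmu q) ^ count_below a J * qwedge q (insert a J) (a # xs))"
proof -
  let ?c = "\<lambda>b. (- qmu q) ^ count_below b J"
  let ?S = "\<Sum>b\<in>{b\<in>J. b < a}. ?c b * ?c b"
  have "kapply d (Suc m) (eps_insert q d m)
      (\<lambda>ys. kapply d (Suc (Suc m)) (eps_g q 1) (basis_tensor a (qwedge q J)) (a # ys)) xs
    = kapply d (Suc m) (eps_insert q d m)
      (\<lambda>ys. complex_of_real (q - 1) * (\<Sum>b\<in>{b\<in>J. b < a}. ?c b * basis_tensor b (qwedge q (J - {b})) ys)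
        - (if a \<in> J then ?c a * basis_tensor a (qwedge q (J - {a})) ys else 0)) xs"
  proof (rule kapply_cong)
    fix ys
    assume "ys \<in> tens d (Suc m)"
    then obtain x r where "ys = x # r" "x \<in> {1..d}" "r \<in> tens d m"
      by (rule tens_SucE)
    then show "kapply d (Suc (Suc m)) (eps_g q 1) (basis_tensor a (qwedge q J)) (a # ys)
      = complex_of_real (q - 1) * (\<Sum>b\<in>{b\<in>J. b < a}. ?c b * basis_tensor b (qwedge q (J - {b})) ys)
        - (if a \<in> J then ?c a * basis_tensor a (qwedge q (J - {a})) ys else 0)"
      using kapply_eps_g_1_basis_tensor_head[OF assms(3) _ _ assms(2)] by simp
  qed
  also have "\<dots> = complex_of_real (q - 1) * ?S * qwedge q J xs
      - (if a \<in> J then ?c a * ?c a * qwedge q J xs else 0)"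
  proof -
    have "(\<Sum>b\<in>{b\<in>J. b < a}.
          ?c b * kapply d (Suc m) (eps_insert q d m) (basis_tensor b (qwedge q (J - {b}))) xs)
        = ?S * qwedge q J xs"
      unfolding sum_distrib_right by (intro sum.cong refl) (simp add: IH mult.assoc)
    then show ?thesis
      by (cases "a \<in> J") (simp_all add: kapply_diff kapply_cmult kapply_sum IH mult.assoc)
  qed
  finally have "kapply d (Suc (Suc m)) (eps_insert q d (Suc m)) (basis_tensor a (qwedge q J)) (a # xs)
      = (1 + complex_of_real (q - 1) * ?S) * qwedge q J xs
        - (if a \<in> J then ?c a * ?c a * qwedge q J xs else 0)"
    using assms(3,4) by (simp add: kapply_eps_insert_Suc algebra_simps)
  also have "\<dots> = (if a \<in> J then 0 else ?c a * ?c a * qwedge q J xs)"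
    using one_add_sum_qmu_square_count_below[of q J a] assms(1,2) by simp
  also have "\<dots> = (if a \<in> J then 0 else (- qmu q) ^ count_below a J * qwedge q (insert a J) (a # xs))"
    using count_below_insert[OF assms(2), of a a] by (simp add: qwedge_Cons)
  finally show ?thesis .
qed

lemma kapply_eps_insert_qwedge_other:
  assumes "finite J" "y \<in> {1..d}" "y \<noteq> a" "xs \<in> tens d (Suc m)"
    and IH: "y \<in> J \<Longrightarrow> kapply d (Suc m) (eps_insert q d m) (basis_tensor a (qwedge q (J - {y}))) xs
      = (if a \<in> J - {y} then 0 else (- qmu q) ^ count_below a (J - {y}) * qwedge q (insert a (J - {y})) xs)"
  shows "kapply d (Suc (Suc m)) (eps_insert q d (Suc m)) (basis_tensor a (qwedge q J)) (y # xs)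
    = (if a \<in> J then 0 else (- qmu q) ^ count_below a J * qwedge q (insert a J) (y # xs))"
proof -
  let ?v = "basis_tensor a (qwedge q (J - {y}))"
  have "kapply d (Suc m) (eps_insert q d m)
      (\<lambda>ys. kapply d (Suc (Suc m)) (eps_g q 1) (basis_tensor a (qwedge q J)) (y # ys)) xs
    = kapply d (Suc m) (eps_insert q d m)
      (\<lambda>ys. (if y \<in> J then (- qmu q) ^ Suc (count_below y J) else 0) * ?v ys) xs"
  proof (rule kapply_cong)
    fix ys
    assume "ys \<in> tens d (Suc m)"
    then obtain x r where "ys = x # r" "x \<in> {1..d}" "r \<in> tens d m"
      by (rule tens_SucE)
    then show "kapply d (Suc (Suc m)) (eps_g q 1) (basis_tensor a (qwedge q J)) (y # ys)
      = (if y \<in> J then (- qmu q) ^ Suc (count_below y J) else 0) * ?v ys"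
      using kapply_eps_g_1_basis_tensor_other[OF assms(2) _ _ assms(3)] by simp
  qed
  then have step: "kapply d (Suc (Suc m)) (eps_insert q d (Suc m)) (basis_tensor a (qwedge q J)) (y # xs)
      = (if y \<in> J then (- qmu q) ^ Suc (count_below y J) * kapply d (Suc m) (eps_insert q d m) ?v xs else 0)"
    using assms(2-4) by (simp add: kapply_eps_insert_Suc kapply_cmult)
  show ?thesis
  proof (cases "y \<in> J \<and> a \<notin> J")
    case True
    have "count_below a J = (if y < a then Suc (count_below a (J - {y})) else count_below a (J - {y}))"
      using count_below_insert[of "J - {y}" y a] assms(1) True by (simp add: insert_absorb)
    then have exps:
      "Suc (count_below y J) + count_below a (J - {y}) = count_below a J + count_below y (insert a J)"
      using count_below_insert[OF assms(1), of a y] True assms(3) by auto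
    have "insert a (J - {y}) = insert a J - {y}"
      using assms(3) by auto
    then have "kapply d (Suc (Suc m)) (eps_insert q d (Suc m)) (basis_tensor a (qwedge q J)) (y # xs)
        = ((- qmu q) ^ Suc (count_below y J) * (- qmu q) ^ count_below a (J - {y}))
          * qwedge q (insert a J - {y}) xs"
      using step IH True by (simp only: mult.assoc if_True if_False Diff_iff simp_thms)
    also have "\<dots> = (- qmu q) ^ count_below a J
        * ((- qmu q) ^ count_below y (insert a J) * qwedge q (insert a J - {y}) xs)"
      by (simp only: exps flip: power_add) (simp only: power_add mult.assoc)
    also have "\<dots> = (- qmu q) ^ count_below a J * qwedge q (insert a J) (y # xs)"
      using True by (simp add: qwedge_Cons)
    finally show ?thesis
      using True by simp
  next
    case False
    then show ?thesis
      using step IH assms(3) by (auto simp: qwedge_Cons)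
  qed
qed

lemma kapply_eps_insert_qwedge:
  assumes "q > 0" "card J = m" "J \<subseteq> {1..d}" "a \<in> {1..d}" "xs \<in> tens d (Suc m)"
  shows "kapply d (Suc m) (eps_insert q d m) (basis_tensor a (qwedge q J)) xs
    = (if a \<in> J then 0 else (- qmu q) ^ count_below a J * qwedge q (insert a J) xs)"
  using assms(2-5)
proof (induction m arbitrary: a J xs)
  case 0
  then obtain x where "xs = [x]" "J = {}"
    using finite_subset by (fastforce elim!: tens_SucE)
  then show ?case
    using "0.prems"(4) by (simp add: kapply_eps_insert kapply_kid count_below_def qwedge_def)
next
  case (Suc m)
  obtain x xs' where xs: "xs = x # xs'" "x \<in> {1..d}" "xs' \<in> tens d (Suc m)"
    using Suc.prems(4) by (rule tens_SucE)
  have fin: "finite J"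
    using Suc.prems(2) finite_subset by blast
  show ?case
  proof (cases "x = a")
    case True
    have "kapply d (Suc m) (eps_insert q d m) (basis_tensor b (qwedge q (J - {b}))) xs'
        = (- qmu q) ^ count_below b J * qwedge q J xs'" if "b \<in> J" for b
    proof -
      have "b \<in> {1..d}" "J - {b} \<subseteq> {1..d}" "card (J - {b}) = m"
        using Suc.prems(1,2) that fin by auto
      then show ?thesis
        using Suc.IH[of "J - {b}" b xs'] xs(3) that by (simp add: count_below_Diff_self insert_absorb)
    qed
    then show ?thesis
      using kapply_eps_insert_qwedge_head[OF assms(1) fin Suc.prems(3) xs(3)] xs True by simp
  next
    case False
    have "kapply d (Suc m) (eps_insert q d m) (basis_tensor a (qwedge q (J - {x}))) xs'
        = (if a \<in> J - {x} then 0 else (- qmu q) ^ count_below a (J - {x}) * qwedge q (insert a (J - {x})) xs')"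
      if "x \<in> J"
    proof -
      have "J - {x} \<subseteq> {1..d}" "card (J - {x}) = m"
        using Suc.prems(1,2) that fin by auto
      then show ?thesis
        using Suc.IH[of "J - {x}" a xs'] Suc.prems(3) xs(3) by simp
    qed
    then show ?thesis
      using kapply_eps_insert_qwedge_other[OF fin xs(2) False xs(3)] xs by simp
  qed
qed

lemma A_words_letters_pos: "w \<in> set (A_words m) \<Longrightarrow> \<forall>x\<in>set w. 1 \<le> x"
  by (cases m) auto

lemma sum_list_map_concat:
  "sum_list (map f (concat xss)) = sum_list (map (\<lambda>xs. sum_list (map f xs)) xss)"
  by (induction xss) simp_all

lemma eps_A_Suc:
  "eps_A q d (Suc m) xs zs
    = (\<Sum>i<Suc m. \<Sum>w\<leftarrow>A_words m. eps_word q d (Suc m) (rev [1..<Suc i] @ map Suc w) xs zs)"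
proof -
  have "eps_A q d (Suc m) xs zs
     = (\<Sum>i\<leftarrow>[0..<Suc m]. \<Sum>w\<leftarrow>A_words m. eps_word q d (Suc m) (rev [1..<Suc i] @ map Suc w) xs zs)"
    unfolding eps_A_def A_words.simps(2) by (simp only: sum_list_map_concat map_map comp_def)
  then show ?thesis
    by (simp only: sum_set_upt_conv_sum_list_nat[symmetric] atLeast0LessThan set_upt)
qed

lemma eps_A_entry:
  assumes "q > 0" "xs \<in> tens d m" "zs \<in> tens d m"
  shows "eps_A q d m xs zs = (if distinct zs then (- qmu q) ^ inv_count zs * qwedge q (set zs) xs else 0)"
  using assms(2,3)
proof (induction m arbitrary: xs zs)
  case 0
  then show ?case
    by (simp add: eps_A_def kid_def qwedge_def)
next
  case (Suc m)
  obtain a zs' where zs: "zs = a # zs'" "a \<in> {1..d}" "zs' \<in> tens d m"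
    using Suc.prems(2) by (rule tens_SucE)
  define c where "c = (if distinct zs' then (- qmu q) ^ inv_count zs' else 0)"
  have tail: "(\<Sum>w\<leftarrow>A_words m. eps_word q d (Suc m) (map Suc w) ys zs)
      = c * basis_tensor a (qwedge q (set zs')) ys"
    if ys_mem: "ys \<in> tens d (Suc m)" for ys
  proof -
    obtain y ys' where ys: "ys = y # ys'" "y \<in> {1..d}" "ys' \<in> tens d m"
      using ys_mem by (rule tens_SucE)
    have "(\<Sum>w\<leftarrow>A_words m. eps_word q d (Suc m) (map Suc w) ys zs)
        = (\<Sum>w\<leftarrow>A_words m. if y = a then eps_word q d m w ys' zs' else 0)"
      unfolding ys(1) zs(1)
      by (intro arg_cong[where f = sum_list] map_cong refl eps_word_map_Suc_Cons)
        (use A_words_letters_pos ys zs in auto)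
    also have "\<dots> = (if y = a then eps_A q d m ys' zs' else 0)"
      by (simp add: eps_A_def)
    finally show ?thesis
      using Suc.IH[OF ys(3) zs(3)] ys(1) by (simp add: c_def)
  qed
  have "eps_A q d (Suc m) xs zs
     = (\<Sum>i<Suc m. kapply d (Suc m) (eps_word q d (Suc m) (rev [1..<Suc i]))
         (\<lambda>ys. \<Sum>w\<leftarrow>A_words m. eps_word q d (Suc m) (map Suc w) ys zs) xs)"
    unfolding eps_A_Suc using Suc.prems by (simp add: eps_word_append kapply_sum_list)
  also have "\<dots> = c * kapply d (Suc m) (eps_insert q d m) (basis_tensor a (qwedge q (set zs'))) xs"
    unfolding kapply_eps_insert sum_distrib_left
    by (intro sum.cong refl) (simp add: kapply_cong[OF tail] kapply_cmult)
  finally have eps_A: "eps_A q d (Suc m) xs zs = \<dots>" .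
  show ?case
  proof (cases "distinct zs'")
    case True
    have "card (set zs') = m" "set zs' \<subseteq> {1..d}"
      using True zs(3) by (auto simp: distinct_card tens_def)
    moreover have "length (filter (\<lambda>y. y < a) zs') = count_below a (set zs')"
      using True by (simp add: length_filter_distinct count_below_def)
    ultimately show ?thesis
      using eps_A True zs Suc.prems(1)
      by (simp add: c_def kapply_eps_insert_qwedge[OF assms(1)] power_add)
  next
    case False
    then show ?thesis
      using eps_A zs(1) by (simp add: c_def)
  qed
qed

lemma sum_qwedge_Diff_mult:
  assumes "J \<subseteq> {1..d}" "card J = Suc n" "zs \<in> tens d n"
  shows "(\<Sum>b\<in>{1..d}. if b \<in> J then qwedge q (J - {b}) zs * qwedge q (J - {b}) xs else 0)
     = (if set zs \<subseteq> J \<and> distinct zs then (- qmu q) ^ inv_count zs * qwedge q (set zs) xs else 0)"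
proof (cases "set zs \<subseteq> J \<and> distinct zs")
  case True
  note True_zs = True
  have fin: "finite J"
    using assms(1) finite_subset by blast
  have "card (J - set zs) = 1"
    using True assms fin by (simp add: card_Diff_subset distinct_card length_tens)
  then obtain b0 where b0: "J - set zs = {b0}"
    by (rule card_1_singletonE)
  have Jb0: "J - {b0} = set zs"
    using b0 True by auto
  have "(if b \<in> J then qwedge q (J - {b}) zs * qwedge q (J - {b}) xs else 0)
      = (if b = b0 then (- qmu q) ^ inv_count zs * qwedge q (set zs) xs else 0)" for b
  proof (cases "b = b0")
    case True
    then show ?thesis
      using b0 Jb0 True_zs by (auto simp: qwedge_def)
  next
    case False
    then have "set zs \<noteq> J - {b}"
      using b0 by auto
    then show ?thesis
      using False by (simp add: qwedge_eq_0)
  qed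
  then have "(\<Sum>b\<in>{1..d}. if b \<in> J then qwedge q (J - {b}) zs * qwedge q (J - {b}) xs else 0)
      = (\<Sum>b\<in>{1..d}. if b = b0 then (- qmu q) ^ inv_count zs * qwedge q (set zs) xs else 0)"
    by simp
  also have "\<dots> = (- qmu q) ^ inv_count zs * qwedge q (set zs) xs"
    using b0 assms(1) by auto
  finally show ?thesis
    using True by simp
next
  case False
  then have zero: "qwedge q (J - {b}) zs = 0" for b
    by (auto intro: qwedge_eq_0)
  show ?thesis
    unfolding if_not_P[OF False] by (intro sum.neutral) (simp add: zero)
qed

lemma SS_op_eq_eps_A:
  assumes "q > 0" "sorted_wrt (<) I" "set I \<subseteq> {1..d}" "length I = Suc n"
    and "xs \<in> tens d n" "zs \<in> tens d n"
  shows "SS_op q d I n xs zs = kscale ((- qmu q) ^ n) (kcomp d n (eps_A q d n) (kproj I)) xs zs"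
proof -
  let ?J = "set I"
  have card: "card ?J = Suc n"
    using assms(2,4) by (simp add: strict_sorted_iff distinct_card)
  have "SS_op q d I n xs zs
      = (\<Sum>u\<in>tens d n. (\<Sum>b\<in>{1..d}. qwedge q ?J (u @ [b]) * qwedge q ?J (b # xs)) * (if u = zs then 1 else 0))"
    unfolding SS_op_eq_sum[OF assms(2,5)] assms(4) sum_tens_Suc_snoc sum_distrib_right
    using assms(6) by (intro sum.cong refl) (auto simp: kid_def length_tens)
  also have "\<dots> = (\<Sum>b\<in>{1..d}. qwedge q ?J (zs @ [b]) * qwedge q ?J (b # xs))"
    using assms(6) by (simp add: sum_delta_mult_right)
  also have "\<dots> = (- qmu q) ^ n
      * (\<Sum>b\<in>{1..d}. if b \<in> ?J then qwedge q (?J - {b}) zs * qwedge q (?J - {b}) xs else 0)"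
    unfolding sum_distrib_left
  proof (intro sum.cong refl)
    fix b
    have "b \<in> ?J \<Longrightarrow> count_below b ?J + count_above b ?J = n"
      using card by (simp add: count_below_add_count_above)
    then show "qwedge q ?J (zs @ [b]) * qwedge q ?J (b # xs)
        = (- qmu q) ^ n * (if b \<in> ?J then qwedge q (?J - {b}) zs * qwedge q (?J - {b}) xs else 0)"
      by (auto simp: qwedge_Cons qwedge_snoc ac_simps simp flip: power_add)
  qed
  also have "\<dots> = (- qmu q) ^ n
      * (if set zs \<subseteq> ?J \<and> distinct zs then (- qmu q) ^ inv_count zs * qwedge q (set zs) xs else 0)"
    by (simp only: sum_qwedge_Diff_mult[OF assms(3) card assms(6)])
  also have "\<dots> = kscale ((- qmu q) ^ n) (kcomp d n (eps_A q d n) (kproj I)) xs zs"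
    using assms(1,5,6) by (simp add: kscale_def kcomp_kproj_right eps_A_entry)
  finally show ?thesis .
qed

theorem lemma5p4:
  fixes q :: real and d n :: nat and I :: "nat list"
  assumes "q > 0" and "1 \<le> n" and "n \<le> d"
    and "length I = n" and "sorted_wrt (<) I" and "set I \<subseteq> {1..d}"
  shows "(\<forall>xs\<in>tens d 1. \<forall>ys\<in>tens d 1.
            SS_op q d I 1 xs ys
            = kscale (complex_of_real (qfact q (n - 1)) * (- qmu q) ^ (n - 1)) (kproj I) xs ys)
       \<and> (\<forall>xs\<in>tens d (n - 1). \<forall>ys\<in>tens d (n - 1).
            SS_op q d I (n - 1) xs ys
            = kscale ((- qmu q) ^ (n - 1)) (kcomp d (n - 1) (eps_A q d (n - 1)) (kproj I)) xs ys)
       \<and> (\<forall>xs\<in>tens d 1. \<forall>ys\<in>tens d 1.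
            SS_op q d [1..<Suc d] 1 xs ys
            = kscale (complex_of_real (qfact q (d - 1)) * (- qmu q) ^ (d - 1)) kid xs ys)
       \<and> (\<forall>xs\<in>tens d (d - 1). \<forall>ys\<in>tens d (d - 1).
            SS_op q d [1..<Suc d] (d - 1) xs ys
            = kscale ((- qmu q) ^ (d - 1)) (eps_A q d (d - 1)) xs ys)"
proof -
  have n: "length I = Suc (n - 1)" and d: "length [1..<Suc d] = Suc (d - 1)"
    using assms(2-4) by auto
  have set_full: "set [1..<Suc d] = {1..d}"
    by auto
  have full: "sorted_wrt (<) [1..<Suc d]" "set [1..<Suc d] \<subseteq> {1..d}"
    by (simp_all only: strict_sorted_iff sorted_upt distinct_upt set_full simp_thms)
  have "kcomp d (d - 1) (eps_A q d (d - 1)) (kproj [1..<Suc d]) xs ys = eps_A q d (d - 1) xs ys"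
    if "ys \<in> tens d (d - 1)" for xs ys
    using that unfolding kcomp_kproj_right[OF that] set_full by (simp add: tens_def)
  moreover have "kproj [1..<Suc d] xs ys = kid xs ys" if "xs \<in> tens d 1" for xs ys
    using that unfolding set_full by (auto simp: kproj_def kid_def tens_def)
  ultimately show ?thesis
    using SS_op_1[OF assms(1,5,6) n] SS_op_eq_eps_A[OF assms(1,5,6) n]
      SS_op_1[OF assms(1) full d] SS_op_eq_eps_A[OF assms(1) full d]
    by (simp add: kscale_def)
qed

end
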